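(* Let $\varphi$ be an automorphism of $E$ with $\varphi^2=\mathrm{id}_E$ and let $\beta=\{e_1,e_2,\ldots\}$ be a basis of $L$. Let $I=\{n\mid\varphi(e_n)=\pm e_n\}$, $I^+=\{i\in I\mid\varphi(e_i)=e_i\}$, $I^-=\{i\in I\mid\varphi(e_i)=-e_i\}$, $J=\mathbb{N}\setminus I$, and for $j\in\mathbb{N}$ put $a_j=(e_j+\varphi(e_j))/2$. Suppose $\varphi$ is of type S2, i.e. $I^+$ is infinite, $I^-$ and $J$ are finite and $J\neq\emptyset$. If each $a_j$, $j\in J$, is a linear combination of monomials of length $\ge 3$, then $T_2(E_\varphi)=T_2(E_{\varphi_\ell})$, where $\varphi_\ell$ is the linearization of $\varphi$.
   Context: $F$ is a field of characteristic zero, $L$ an infinite-dimensional $F$-vector space with basis $e_1,e_2,\ldots$, $E$ its Grassmann algebra (basis $1$ and monomials $e_{i_1}\cdots e_{i_k}$, $i_1<\cdots<i_k$, $e_ie_j=-e_je_i$); the length of such a monomial is $k$. For an automorphism $\psi$ of $E$ with $\psi^2=\mathrm{id}$, $E_\psi=E_{0,\psi}\oplus E_{1,\psi}$ denotes the $\mathbb{Z}_2$-grading given by the eigenspaces of $\psi$ for eigenvalues $1$ and $-1$. Linearization: write $\varphi(e_i)=u_i+v_i$ with $u_i\in L$ and $v_i$ a linear combination of monomials of length $\ge2$; $\varphi_\ell$ is the endomorphism of $E$ with $\varphi_\ell(e_i)=u_i$ (it is an automorphism of order 2). $T_2(A)$ denotes the ideal of $\mathbb{Z}_2$-graded polynomial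 identities of the superalgebra $A=A_0\oplus A_1$, i.e. the elements of the free algebra $F\langle Y\cup Z\rangle$ ($Y$ variables of degree $0$, $Z$ of degree $1$) vanishing under all degree-respecting substitutions. *)

theory Defs
  imports Main
begin

text \<open>Concrete model of the Grassmann algebra E of the vector space L with basis
  e_0, e_1, e_2, ... (indexed by nat).  An element of E is a finitely supported
  function from finite sets of indices (a set S = {i1 < ... < ik} standing for the
  monomial e_i1 ... e_ik of length k = card S) to the coefficient field.\<close>

type_synonym 'a grass = "nat set \<Rightarrow> 'a"

definition grass :: "'a::zero grass set" where
  "grass = {x. finite {S. x S \<noteq> 0} \<and> (\<forall>S. x S \<noteq> 0 \<longrightarrow> finite S)}"

definition gzero :: "'a::zero grass" where
  "gzero = (\<lambda>S. 0)"

definition gone :: "'a::{zero,one} grass" where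
  "gone = (\<lambda>S. if S = {} then 1 else 0)"

definition gen :: "nat \<Rightarrow> 'a::{zero,one} grass" where
  "gen i = (\<lambda>S. if S = {i} then 1 else 0)"

definition gadd :: "'a::plus grass \<Rightarrow> 'a grass \<Rightarrow> 'a grass" where
  "gadd x y = (\<lambda>S. x S + y S)"

definition gneg :: "'a::uminus grass \<Rightarrow> 'a grass" where
  "gneg x = (\<lambda>S. - x S)"

definition gsmult :: "'a::times \<Rightarrow> 'a grass \<Rightarrow> 'a grass" where
  "gsmult c x = (\<lambda>S. c * x S)"

text \<open>number of inversions: e_S e_T = (-1)^inv S T e_(S \<union> T) for disjoint S, T\<close>
definition inv_count :: "nat set \<Rightarrow> nat set \<Rightarrow> nat" where
  "inv_count S T = card {(s, t). s \<in> S \<and> t \<in> T \<and> t < s}"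

definition gmul :: "'a::comm_ring_1 grass \<Rightarrow> 'a grass \<Rightarrow> 'a grass" where
  "gmul x y = (\<lambda>U. \<Sum>(S, T) \<in> {(S, T). x S \<noteq> 0 \<and> y T \<noteq> 0 \<and> S \<inter> T = {} \<and> S \<union> T = U}.
                  (-1) ^ inv_count S T * x S * y T)"

definition gprod :: "'a::comm_ring_1 grass list \<Rightarrow> 'a grass" where
  "gprod xs = foldr gmul xs gone"

definition grass_aut :: "('a::field grass \<Rightarrow> 'a grass) \<Rightarrow> bool" where
  "grass_aut \<phi> \<longleftrightarrow> bij_betw \<phi> grass grass
     \<and> (\<forall>x\<in>grass. \<forall>y\<in>grass. \<phi> (gadd x y) = gadd (\<phi> x) (\<phi> y))
     \<and> (\<forall>c. \<forall>x\<in>grass. \<phi> (gsmult c x) = gsmult c (\<phi> x))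
     \<and> (\<forall>x\<in>grass. \<forall>y\<in>grass. \<phi> (gmul x y) = gmul (\<phi> x) (\<phi> y))
     \<and> \<phi> gone = gone"

definition Iset :: "('a::field grass \<Rightarrow> 'a grass) \<Rightarrow> nat set" where
  "Iset \<phi> = {n. \<phi> (gen n) = gen n \<or> \<phi> (gen n) = gneg (gen n)}"

definition Iplus :: "('a::field grass \<Rightarrow> 'a grass) \<Rightarrow> nat set" where
  "Iplus \<phi> = {i \<in> Iset \<phi>. \<phi> (gen i) = gen i}"

definition Iminus :: "('a::field grass \<Rightarrow> 'a grass) \<Rightarrow> nat set" where
  "Iminus \<phi> = {i \<in> Iset \<phi>. \<phi> (gen i) = gneg (gen i)}"

definition Jset :: "('a::field grass \<Rightarrow> 'a grass) \<Rightarrow> nat set" where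
  "Jset \<phi> = UNIV - Iset \<phi>"

definition aj :: "('a::field grass \<Rightarrow> 'a grass) \<Rightarrow> nat \<Rightarrow> 'a grass" where
  "aj \<phi> j = gsmult (1/2) (gadd (gen j) (\<phi> (gen j)))"

definition type_S2 :: "('a::field grass \<Rightarrow> 'a grass) \<Rightarrow> bool" where
  "type_S2 \<phi> \<longleftrightarrow> infinite (Iplus \<phi>) \<and> finite (Iminus \<phi>) \<and> finite (Jset \<phi>) \<and> Jset \<phi> \<noteq> {}"

definition length_ge :: "nat \<Rightarrow> 'a::zero grass \<Rightarrow> bool" where
  "length_ge k x \<longleftrightarrow> (\<forall>S. x S \<noteq> 0 \<longrightarrow> k \<le> card S)"

definition gext :: "(nat \<Rightarrow> 'a::comm_ring_1 grass) \<Rightarrow> 'a grass \<Rightarrow> 'a grass" where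
  "gext u x = (\<lambda>U. \<Sum>S | x S \<noteq> 0. x S * gprod (map u (sorted_list_of_set S)) U)"

text \<open>linearization: phi(e_i) = u_i + v_i, u_i \<in> L (length-1 part), v_i of length \<ge> 2\<close>
definition lin_part :: "('a::field grass \<Rightarrow> 'a grass) \<Rightarrow> nat \<Rightarrow> 'a grass" where
  "lin_part \<phi> i = (\<lambda>S. if card S = 1 then \<phi> (gen i) S else 0)"

definition linearization :: "('a::field grass \<Rightarrow> 'a grass) \<Rightarrow> ('a grass \<Rightarrow> 'a grass)" where
  "linearization \<phi> = gext (lin_part \<phi>)"

definition Ezero :: "('a::field grass \<Rightarrow> 'a grass) \<Rightarrow> 'a grass set" where
  "Ezero \<psi> = {x \<in> grass. \<psi> x = x}"

definition Eone :: "('a::field grass \<Rightarrow> 'a grass) \<Rightarrow> 'a grass set" where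
  "Eone \<psi> = {x \<in> grass. \<psi> x = gneg x}"

text \<open>Free associative algebra F<Y \<union> Z>: variables Inl i = y_i (degree 0),
  Inr i = z_i (degree 1); words are lists of variables; polynomials are finitely
  supported coefficient functions on words.\<close>
type_synonym 'a fpoly = "(nat + nat) list \<Rightarrow> 'a"

definition fpolys :: "'a::zero fpoly set" where
  "fpolys = {f. finite {w. f w \<noteq> 0}}"

definition peval :: "((nat + nat) \<Rightarrow> 'a::comm_ring_1 grass) \<Rightarrow> 'a fpoly \<Rightarrow> 'a grass" where
  "peval s f = (\<lambda>U. \<Sum>w | f w \<noteq> 0. f w * gprod (map s w) U)"

definition T2 :: "'a::comm_ring_1 grass set \<Rightarrow> 'a grass set \<Rightarrow> 'a fpoly set" where
  "T2 A0 A1 = {f \<in> fpolys. \<forall>s. (\<forall>i. s (Inl i) \<in> A0) \<and> (\<forall>i. s (Inr i) \<in> A1)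
                                  \<longrightarrow> peval s f = gzero}"

end

theory Submission
  imports Defs
begin

text \<open>
  Put \<open>f\<^sub>i = e\<^sub>i\<close> for \<open>i \<in> I\<^sup>+\<close> and \<open>f\<^sub>i = (e\<^sub>i - \<phi> e\<^sub>i) / 2\<close> otherwise.
  Since \<open>\<phi>\<close> fixes infinitely many generators, each \<open>\<phi> e\<^sub>i\<close> anticommutes with a fixed
  generator \<open>e\<^sub>k\<close> not occurring in it, which forces \<open>\<phi> e\<^sub>i\<close> to be odd. Hence the \<open>f\<^sub>i\<close>
  anticommute and \<open>e\<^sub>i \<mapsto> f\<^sub>i\<close> extends to an endomorphism \<open>\<psi>\<close> of \<open>E\<close>. By construction
  \<open>\<phi> f\<^sub>i = \<plusminus>f\<^sub>i\<close> with the same sign as in \<open>\<phi>\<^sub>l e\<^sub>i = \<plusminus>e\<^sub>i\<close>, so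
  \<open>\<phi> \<circ> \<psi> = \<psi> \<circ> \<phi>\<^sub>l\<close>. Moreover \<open>f\<^sub>i = e\<^sub>i\<close> except for the finitely many \<open>j \<in> J\<close>,
  where \<open>f\<^sub>j = e\<^sub>j - a\<^sub>j\<close> with \<open>a\<^sub>j\<close> of length at least 2. So \<open>\<psi>\<close> is unitriangular with
  respect to monomial length, hence bijective, and it is a graded isomorphism from
  \<open>E\<^bsub>\<phi>\<^sub>l\<^esub>\<close> onto \<open>E\<^bsub>\<phi>\<^esub>\<close>; isomorphic superalgebras have the same graded identities.
\<close>

definition inversions :: "nat set \<Rightarrow> nat set \<Rightarrow> (nat \<times> nat) set" where
  "inversions S T = {(s, t). s \<in> S \<and> t \<in> T \<and> t < s}"

lemma inv_count_eq_card: "inv_count S T = card (inversions S T)"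
  by (simp add: inv_count_def inversions_def)

lemma finite_inversions: "finite S \<Longrightarrow> finite T \<Longrightarrow> finite (inversions S T)"
  unfolding inversions_def by (rule finite_subset[of _ "S \<times> T"]) auto

lemma inv_count_empty [simp]: "inv_count {} T = 0" "inv_count S {} = 0"
  by (auto simp: inv_count_def)

lemma inv_count_Un_left:
  assumes "finite S" "finite T" "finite W" "S \<inter> T = {}"
  shows "inv_count (S \<union> T) W = inv_count S W + inv_count T W"
proof -
  have "inversions (S \<union> T) W = inversions S W \<union> inversions T W"
    "inversions S W \<inter> inversions T W = {}"
    using assms(4) by (auto simp: inversions_def)
  then show ?thesis
    using assms by (simp add: inv_count_eq_card card_Un_disjoint finite_inversions)
qed

lemma inv_count_Un_right:
  assumes "finite S" "finite T" "finite W" "T \<inter> W = {}"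
  shows "inv_count S (T \<union> W) = inv_count S T + inv_count S W"
proof -
  have "inversions S (T \<union> W) = inversions S T \<union> inversions S W"
    "inversions S T \<inter> inversions S W = {}"
    using assms(4) by (auto simp: inversions_def)
  then show ?thesis
    using assms by (simp add: inv_count_eq_card card_Un_disjoint finite_inversions)
qed

lemma inv_count_swap:
  assumes "finite S" "finite T" "S \<inter> T = {}"
  shows "inv_count S T + inv_count T S = card S * card T"
proof -
  have "S \<times> T = inversions S T \<union> prod.swap ` inversions T S"
    using assms(3) by (auto simp: inversions_def image_iff)
  moreover have "inversions S T \<inter> prod.swap ` inversions T S = {}"
    by (auto simp: inversions_def)
  moreover have "card (prod.swap ` inversions T S) = inv_count T S"
    by (simp add: inv_count_eq_card card_image)
  ultimately show ?thesis
    using assms by (simp add: inv_count_eq_card card_Un_disjoint finite_inversions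
        flip: card_cartesian_product)
qed

lemma inv_count_singleton_left: "finite T \<Longrightarrow> inv_count {m} T = card {t\<in>T. t < m}"
proof -
  have "{(s, t). s \<in> {m} \<and> t \<in> T \<and> t < s} = Pair m ` {t\<in>T. t < m}" by auto
  then show ?thesis unfolding inv_count_def by (simp add: card_image inj_on_def)
qed

lemma minus_one_power_inv_count_swap:
  assumes "finite S" "finite T" "S \<inter> T = {}"
  shows "(-1::'a::comm_ring_1) ^ inv_count S T = (-1) ^ (card S * card T) * (-1) ^ inv_count T S"
  by (simp flip: inv_count_swap[OF assms] add: power_add mult.assoc)

section \<open>Monomials and the product\<close>

definition supp :: "'a::zero grass \<Rightarrow> nat set set" where
  "supp x = {S. x S \<noteq> 0}"

definition gmono :: "nat set \<Rightarrow> 'a::comm_ring_1 grass" where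
  "gmono S = (\<lambda>U. if U = S then 1 else 0)"

definition gsum :: "'b set \<Rightarrow> ('b \<Rightarrow> 'a::comm_ring_1 grass) \<Rightarrow> 'a grass" where
  "gsum A F = (\<lambda>U. \<Sum>i\<in>A. F i U)"

definition mono_coeff :: "nat set \<Rightarrow> nat set \<Rightarrow> nat set \<Rightarrow> 'a::comm_ring_1" where
  "mono_coeff S T U = (if S \<inter> T = {} \<and> S \<union> T = U then (-1) ^ inv_count S T else 0)"

lemma grassI: "finite (supp x) \<Longrightarrow> (\<And>S. x S \<noteq> 0 \<Longrightarrow> finite S) \<Longrightarrow> x \<in> grass"
  by (auto simp: grass_def supp_def)

lemma finite_supp [simp]: "x \<in> grass \<Longrightarrow> finite (supp x)"
  by (simp add: grass_def supp_def)

lemma finite_nonzero_index_set: "x \<in> grass \<Longrightarrow> x S \<noteq> 0 \<Longrightarrow> finite S"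
  by (simp add: grass_def)

lemma finite_supp_member: "x \<in> grass \<Longrightarrow> S \<in> supp x \<Longrightarrow> finite S"
  by (simp add: grass_def supp_def)

lemma finite_Union_supp: "x \<in> grass \<Longrightarrow> finite (\<Union>(supp x))"
  by (auto dest: finite_supp_member)

lemma gmono_grass [simp]: "finite S \<Longrightarrow> (gmono S :: 'a::comm_ring_1 grass) \<in> grass"
  by (rule grassI) (auto simp: gmono_def supp_def split: if_splits)

lemma gone_eq_gmono: "gone = gmono {}"
  by (simp add: gone_def gmono_def)

lemma gen_eq_gmono: "gen i = gmono {i}"
  by (simp add: gen_def gmono_def)

lemma gzero_grass [simp]: "gzero \<in> grass"
  by (auto simp: grass_def gzero_def)

lemma gone_grass [simp]: "(gone :: 'a::comm_ring_1 grass) \<in> grass"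
  by (simp add: gone_eq_gmono)

lemma gen_grass [simp]: "(gen i :: 'a::comm_ring_1 grass) \<in> grass"
  by (simp add: gen_eq_gmono)

lemma supp_gone: "supp (gone :: 'a::comm_ring_1 grass) = {{}}"
  by (auto simp: supp_def gone_def)

lemma supp_gen: "supp (gen k :: 'a::comm_ring_1 grass) = {{k}}"
  by (auto simp: supp_def gen_def)

lemma supp_gadd: "supp (gadd x y) \<subseteq> supp x \<union> supp (y :: 'a::monoid_add grass)"
  by (auto simp: supp_def gadd_def)

lemma supp_gsmult: "supp (gsmult c x) \<subseteq> supp (x :: 'a::mult_zero grass)"
  by (auto simp: supp_def gsmult_def)

lemma gadd_grass [simp]:
  "x \<in> grass \<Longrightarrow> y \<in> grass \<Longrightarrow> gadd x y \<in> (grass :: 'a::comm_monoid_add grass set)"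
  by (rule grassI, rule finite_subset[OF supp_gadd]) (auto simp: gadd_def grass_def, metis add_0)

lemma gsmult_grass [simp]: "x \<in> grass \<Longrightarrow> gsmult c x \<in> (grass :: 'a::mult_zero grass set)"
  by (rule grassI, rule finite_subset[OF supp_gsmult])
    (auto simp: gsmult_def grass_def, metis mult_zero_right)

lemma gneg_grass [simp]: "x \<in> grass \<Longrightarrow> gneg x \<in> (grass :: 'a::group_add grass set)"
  by (auto simp: gneg_def grass_def)

lemma gneg_eq_gsmult: "gneg x = gsmult (-1) (x :: 'a::comm_ring_1 grass)"
  by (simp add: gneg_def gsmult_def)

lemma gsmult_one [simp]: "gsmult 1 x = (x :: 'a::comm_ring_1 grass)"
  by (simp add: gsmult_def)

lemma gsmult_gzero [simp]: "gsmult c gzero = (gzero :: 'a::comm_ring_1 grass)"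
  by (simp add: gsmult_def gzero_def)

lemma gsmult_gsmult [simp]: "gsmult c (gsmult d x) = gsmult (c * d) (x :: 'a::comm_ring_1 grass)"
  by (simp add: gsmult_def mult.assoc)

lemma gneg_gneg [simp]: "gneg (gneg x) = (x :: 'a::comm_ring_1 grass)"
  by (simp add: gneg_def)

lemma gneg_gzero [simp]: "gneg gzero = (gzero :: 'a::comm_ring_1 grass)"
  by (simp add: gneg_def gzero_def)

lemma gmul_nonzeroE:
  assumes "gmul x y U \<noteq> 0"
  obtains S T where "x S \<noteq> 0" "y T \<noteq> 0" "S \<inter> T = {}" "S \<union> T = U"
proof -
  let ?P = "{(S, T). x S \<noteq> 0 \<and> y T \<noteq> 0 \<and> S \<inter> T = {} \<and> S \<union> T = U}"
  have "(\<Sum>(S, T)\<in>?P. (-1) ^ inv_count S T * x S * y T) \<noteq> 0"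
    using assms by (simp add: gmul_def)
  then obtain p where "p \<in> ?P" by (meson sum.not_neutral_contains_not_neutral)
  then show thesis using that by auto
qed

lemma supp_gmul: "supp (gmul x y) \<subseteq> (\<lambda>(S, T). S \<union> T) ` (supp x \<times> supp y)"
  by (auto simp: supp_def elim!: gmul_nonzeroE)

lemma gmul_grass [simp]: "x \<in> grass \<Longrightarrow> y \<in> grass \<Longrightarrow> gmul x y \<in> grass"
  by (rule grassI, rule finite_subset[OF supp_gmul])
    (auto elim!: gmul_nonzeroE dest: finite_nonzero_index_set)

lemma gmul_eq_sum_mono_coeff:
  assumes "finite A" "finite B" "supp x \<subseteq> A" "supp y \<subseteq> B"
  shows "gmul x y U = (\<Sum>S\<in>A. \<Sum>T\<in>B. x S * y T * mono_coeff S T U)"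
proof -
  let ?P = "{(S, T). x S \<noteq> 0 \<and> y T \<noteq> 0 \<and> S \<inter> T = {} \<and> S \<union> T = U}"
  have "gmul x y U = (\<Sum>(S, T)\<in>?P. x S * y T * mono_coeff S T U)"
    unfolding gmul_def by (rule sum.cong) (auto simp: mono_coeff_def)
  also have "\<dots> = (\<Sum>(S, T)\<in>A \<times> B. x S * y T * mono_coeff S T U)"
  proof (rule sum.mono_neutral_left)
    show "\<forall>p\<in>A \<times> B - ?P. (case p of (S, T) \<Rightarrow> x S * y T * mono_coeff S T U) = 0"
    proof
      fix p assume "p \<in> A \<times> B - ?P"
      then show "(case p of (S, T) \<Rightarrow> x S * y T * mono_coeff S T U) = 0"
        by (cases p) (auto simp: mono_coeff_def)
    qed
  qed (use assms in \<open>auto simp: supp_def\<close>)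
  also have "\<dots> = (\<Sum>S\<in>A. \<Sum>T\<in>B. x S * y T * mono_coeff S T U)"
    by (simp add: sum.cartesian_product)
  finally show ?thesis .
qed

lemma gmul_eq_sum_mono_coeff_supp:
  "x \<in> grass \<Longrightarrow> y \<in> grass \<Longrightarrow>
    gmul x y U = (\<Sum>S\<in>supp x. \<Sum>T\<in>supp y. x S * y T * mono_coeff S T U)"
  by (rule gmul_eq_sum_mono_coeff) auto

lemma gmul_gmono_gmono_apply: "gmul (gmono S) (gmono T) U = mono_coeff S T U"
proof -
  have "gmul (gmono S) (gmono T) U =
      (\<Sum>S'\<in>{S}. \<Sum>T'\<in>{T}. gmono S S' * gmono T T' * mono_coeff S' T' U)"
    by (rule gmul_eq_sum_mono_coeff) (auto simp: supp_def gmono_def)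
  then show ?thesis by (simp add: gmono_def)
qed

lemma gmul_gmono_gmono:
  "gmul (gmono S) (gmono T) =
    (if S \<inter> T = {} then gsmult ((-1) ^ inv_count S T) (gmono (S \<union> T)) else gzero)"
  unfolding gmul_gmono_gmono_apply[abs_def]
  by (rule ext) (simp add: mono_coeff_def gsmult_def gmono_def gzero_def)

lemma gmul_gadd_left:
  assumes "x \<in> grass" "y \<in> grass" "z \<in> grass"
  shows "gmul (gadd x y) z = gadd (gmul x z) (gmul y z)"
proof
  fix U
  let ?A = "supp x \<union> supp y"
  have "\<And>w. supp w \<subseteq> ?A \<Longrightarrow> gmul w z U = (\<Sum>S\<in>?A. \<Sum>T\<in>supp z. w S * z T * mono_coeff S T U)"
    by (rule gmul_eq_sum_mono_coeff) (use assms in auto)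
  then show "gmul (gadd x y) z U = gadd (gmul x z) (gmul y z) U"
    using supp_gadd[of x y] by (simp add: gadd_def sum.distrib distrib_right)
qed

lemma gmul_gadd_right:
  assumes "x \<in> grass" "y \<in> grass" "z \<in> grass"
  shows "gmul z (gadd x y) = gadd (gmul z x) (gmul z y)"
proof
  fix U
  let ?A = "supp x \<union> supp y"
  have "\<And>w. supp w \<subseteq> ?A \<Longrightarrow> gmul z w U = (\<Sum>S\<in>supp z. \<Sum>T\<in>?A. z S * w T * mono_coeff S T U)"
    by (rule gmul_eq_sum_mono_coeff) (use assms in auto)
  then show "gmul z (gadd x y) U = gadd (gmul z x) (gmul z y) U"
    using supp_gadd[of x y] by (simp add: gadd_def sum.distrib distrib_right distrib_left)
qed

lemma gmul_gsmult_left: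
  assumes "x \<in> grass" "y \<in> grass"
  shows "gmul (gsmult c x) y = gsmult c (gmul x y)"
proof
  fix U
  have "\<And>w. supp w \<subseteq> supp x \<Longrightarrow> gmul w y U = (\<Sum>S\<in>supp x. \<Sum>T\<in>supp y. w S * y T * mono_coeff S T U)"
    by (rule gmul_eq_sum_mono_coeff) (use assms in auto)
  then show "gmul (gsmult c x) y U = gsmult c (gmul x y) U"
    using supp_gsmult[of c x] by (simp add: gsmult_def sum_distrib_left mult.assoc)
qed

lemma gmul_gsmult_right:
  assumes "x \<in> grass" "y \<in> grass"
  shows "gmul x (gsmult c y) = gsmult c (gmul x y)"
proof
  fix U
  have "\<And>w. supp w \<subseteq> supp y \<Longrightarrow> gmul x w U = (\<Sum>S\<in>supp x. \<Sum>T\<in>supp y. x S * w T * mono_coeff S T U)"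
    by (rule gmul_eq_sum_mono_coeff) (use assms in auto)
  then show "gmul x (gsmult c y) U = gsmult c (gmul x y) U"
    using supp_gsmult[of c y] by (simp add: gsmult_def sum_distrib_left mult_ac)
qed

lemma gmul_gzero_left [simp]: "gmul gzero x = gzero"
  by (simp add: gmul_def gzero_def)

lemma gmul_gzero_right [simp]: "gmul x gzero = gzero"
  by (simp add: gmul_def gzero_def)

lemma gmul_gone_left [simp]:
  assumes "x \<in> grass"
  shows "gmul gone x = x"
proof
  fix U
  have "gmul gone x U = (\<Sum>S\<in>{{}}. \<Sum>T\<in>supp x. gone S * x T * mono_coeff S T U)"
    by (rule gmul_eq_sum_mono_coeff) (simp_all add: assms supp_gone)
  also have "\<dots> = (\<Sum>T\<in>supp x. if T = U then x T else 0)"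
    by (simp add: gone_def mono_coeff_def if_distrib cong: if_cong)
  also have "\<dots> = x U"
    using assms by (simp add: sum.delta, simp add: supp_def)
  finally show "gmul gone x U = x U" .
qed

lemma gmul_gone_right [simp]:
  assumes "x \<in> grass"
  shows "gmul x gone = x"
proof
  fix U
  have "gmul x gone U = (\<Sum>S\<in>supp x. \<Sum>T\<in>{{}}. x S * gone T * mono_coeff S T U)"
    by (rule gmul_eq_sum_mono_coeff) (simp_all add: assms supp_gone)
  also have "\<dots> = (\<Sum>S\<in>supp x. if S = U then x S else 0)"
    by (simp add: gone_def mono_coeff_def if_distrib cong: if_cong)
  also have "\<dots> = x U"
    using assms by (simp add: sum.delta, simp add: supp_def)
  finally show "gmul x gone U = x U" .
qed

lemma gsum_empty [simp]: "gsum {} F = gzero"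
  by (simp add: gsum_def gzero_def)

lemma gsum_insert: "finite A \<Longrightarrow> a \<notin> A \<Longrightarrow> gsum (insert a A) F = gadd (F a) (gsum A F)"
  by (simp add: gsum_def gadd_def)

lemma gsum_grass [simp]: "finite A \<Longrightarrow> (\<And>i. i \<in> A \<Longrightarrow> F i \<in> grass) \<Longrightarrow> gsum A F \<in> grass"
  by (induction A rule: finite_induct) (auto simp: gsum_insert)

lemma gsum_cong: "(\<And>i. i \<in> A \<Longrightarrow> F i = G i) \<Longrightarrow> gsum A F = gsum A G"
  by (simp add: gsum_def)

lemma gsum_cong_simp [cong]: "A = B \<Longrightarrow> (\<And>i. i \<in> B =simp=> F i = G i) \<Longrightarrow> gsum A F = gsum B G"
  unfolding gsum_def simp_implies_def by (rule ext) (simp cong: sum.cong)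

lemma gsum_swap: "gsum A (\<lambda>i. gsum B (\<lambda>j. F i j)) = gsum B (\<lambda>j. gsum A (\<lambda>i. F i j))"
  unfolding gsum_def by (rule ext) (rule sum.swap)

lemma gsmult_gsum: "gsmult c (gsum A F) = gsum A (\<lambda>i. gsmult c (F i))"
  by (simp add: gsmult_def gsum_def sum_distrib_left)

lemma grass_expansion: "x \<in> grass \<Longrightarrow> gsum (supp x) (\<lambda>S. gsmult (x S) (gmono S)) = x"
proof
  fix U assume x: "x \<in> grass"
  have "(\<Sum>S\<in>supp x. x S * (if U = S then 1 else 0)) = (\<Sum>S\<in>supp x. if U = S then x S else 0)"
    by (rule sum.cong) auto
  also have "\<dots> = (if U \<in> supp x then x U else 0)"
    by (simp add: sum.delta'[OF finite_supp[OF x]])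
  finally show "gsum (supp x) (\<lambda>S. gsmult (x S) (gmono S)) U = x U"
    by (auto simp: gsum_def gsmult_def gmono_def supp_def)
qed

lemma gmul_gsum_left:
  "finite A \<Longrightarrow> (\<And>i. i \<in> A \<Longrightarrow> F i \<in> grass) \<Longrightarrow> y \<in> grass \<Longrightarrow>
    gmul (gsum A F) y = gsum A (\<lambda>i. gmul (F i) y)"
  by (induction A rule: finite_induct) (auto simp: gsum_insert gmul_gadd_left)

lemma gmul_gsum_right:
  "finite A \<Longrightarrow> (\<And>i. i \<in> A \<Longrightarrow> F i \<in> grass) \<Longrightarrow> y \<in> grass \<Longrightarrow>
    gmul y (gsum A F) = gsum A (\<lambda>i. gmul y (F i))"
  by (induction A rule: finite_induct) (auto simp: gsum_insert gmul_gadd_right)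

lemma gmul_gsum_gsum:
  assumes "finite A" "finite B" "\<And>S. S \<in> A \<Longrightarrow> P S \<in> grass" "\<And>T. T \<in> B \<Longrightarrow> Q T \<in> grass"
  shows "gmul (gsum A (\<lambda>S. gsmult (a S) (P S))) (gsum B (\<lambda>T. gsmult (b T) (Q T)))
       = gsum A (\<lambda>S. gsum B (\<lambda>T. gsmult (a S * b T) (gmul (P S) (Q T))))"
proof -
  have "gmul (gsum A (\<lambda>S. gsmult (a S) (P S))) (gsum B (\<lambda>T. gsmult (b T) (Q T)))
      = gsum A (\<lambda>S. gmul (gsmult (a S) (P S)) (gsum B (\<lambda>T. gsmult (b T) (Q T))))"
    by (rule gmul_gsum_left) (use assms in auto)
  also have "\<dots> = gsum A (\<lambda>S. gsum B (\<lambda>T. gmul (gsmult (a S) (P S)) (gsmult (b T) (Q T))))"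
    by (rule gsum_cong, rule gmul_gsum_right) (use assms in auto)
  also have "\<dots> = gsum A (\<lambda>S. gsum B (\<lambda>T. gsmult (a S * b T) (gmul (P S) (Q T))))"
    by (intro gsum_cong) (use assms in \<open>simp add: gmul_gsmult_left gmul_gsmult_right mult.commute\<close>)
  finally show ?thesis .
qed

lemma gmul_eq_gsum_gmono:
  "x \<in> grass \<Longrightarrow> y \<in> grass \<Longrightarrow> gmul x y =
    gsum (supp x) (\<lambda>S. gsum (supp y) (\<lambda>T. gsmult (x S * y T) (gmul (gmono S) (gmono T))))"
  using gmul_gsum_gsum[of "supp x" "supp y" gmono gmono x y]
  by (simp add: grass_expansion finite_supp_member)

lemma gmul_gmono_assoc:
  assumes "finite S" "finite T" "finite W"
  shows "gmul (gmul (gmono S) (gmono T)) (gmono W) = gmul (gmono S) (gmul (gmono T) (gmono W))"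
proof (cases "S \<inter> T = {} \<and> T \<inter> W = {} \<and> S \<inter> W = {}")
  case True
  then have "inv_count (S \<union> T) W = inv_count S W + inv_count T W"
    "inv_count S (T \<union> W) = inv_count S T + inv_count S W"
    using assms by (auto intro: inv_count_Un_left inv_count_Un_right)
  with True assms show ?thesis
    by (simp add: gmul_gmono_gmono gmul_gsmult_left gmul_gsmult_right power_add Un_assoc
        Int_Un_distrib Int_Un_distrib2 mult_ac)
next
  case False
  then show ?thesis
    using assms by (auto simp: gmul_gmono_gmono gmul_gsmult_left gmul_gsmult_right)
qed

lemma gmul_assoc:
  assumes "x \<in> grass" "y \<in> grass" "z \<in> grass"
  shows "gmul (gmul x y) z = gmul x (gmul y z)"
proof -
  have "\<And>S. S \<in> supp x \<union> supp y \<union> supp z \<Longrightarrow> finite S"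
    using assms finite_supp_member by blast
  then have "gmul (gmul (gsum (supp x) (\<lambda>S. gsmult (x S) (gmono S)))
                         (gsum (supp y) (\<lambda>S. gsmult (y S) (gmono S))))
                   (gsum (supp z) (\<lambda>S. gsmult (z S) (gmono S)))
           = gmul (gsum (supp x) (\<lambda>S. gsmult (x S) (gmono S)))
                  (gmul (gsum (supp y) (\<lambda>S. gsmult (y S) (gmono S)))
                        (gsum (supp z) (\<lambda>S. gsmult (z S) (gmono S))))"
    using assms
    by (simp add: gmul_gsum_left gmul_gsum_right gmul_gsmult_left gmul_gsmult_right
        gsmult_gsum gmul_gmono_assoc mult_ac cong: gsum_cong)
  then show ?thesis using assms by (simp add: grass_expansion)
qed

section \<open>Odd elements\<close>

definition godd :: "'a::zero grass \<Rightarrow> bool" where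
  "godd x \<longleftrightarrow> (\<forall>S. x S \<noteq> 0 \<longrightarrow> odd (card S))"

lemma gmul_gmono_commute:
  assumes "finite S" "finite T"
  shows "gmul (gmono S) (gmono T) = gsmult ((-1) ^ (card S * card T)) (gmul (gmono T) (gmono S))"
proof (cases "S \<inter> T = {}")
  case True
  then show ?thesis
    by (simp add: gmul_gmono_gmono Int_commute Un_commute
        minus_one_power_inv_count_swap[OF assms True])
next
  case False
  then show ?thesis by (simp add: gmul_gmono_gmono Int_commute)
qed

lemma godd_anticommute:
  assumes "x \<in> grass" "y \<in> grass" "godd x" "godd y"
  shows "gmul x y = gneg (gmul y x)"
proof -
  let ?e = "\<lambda>S T. gmul (gmono S) (gmono T)"
  have "gmul x y = gsum (supp x) (\<lambda>S. gsum (supp y) (\<lambda>T. gsmult (x S * y T) (?e S T)))"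
    using assms(1,2) by (rule gmul_eq_gsum_gmono)
  also have "\<dots> = gsum (supp x) (\<lambda>S. gsum (supp y) (\<lambda>T. gsmult (- (x S * y T)) (?e T S)))"
  proof (intro gsum_cong)
    fix S T assume S: "S \<in> supp x" and T: "T \<in> supp y"
    have "odd (card S)" "odd (card T)" using S T assms(3,4) by (auto simp: godd_def supp_def)
    then show "gsmult (x S * y T) (?e S T) = gsmult (- (x S * y T)) (?e T S)"
      using S T assms(1,2) by (subst gmul_gmono_commute) (auto simp: finite_supp_member)
  qed
  also have "\<dots> = gneg (gsum (supp y) (\<lambda>T. gsum (supp x) (\<lambda>S. gsmult (y T * x S) (?e T S))))"
    by (subst gsum_swap) (simp add: gneg_eq_gsmult gsmult_gsum mult_ac)
  also have "\<dots> = gneg (gmul y x)"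
    using assms by (simp add: gmul_eq_gsum_gmono)
  finally show ?thesis .
qed

lemma godd_gen: "godd (gen i :: 'a::comm_ring_1 grass)"
  by (simp add: godd_def gen_def)

lemma godd_gneg: "godd x \<Longrightarrow> godd (gneg (x :: 'a::comm_ring_1 grass))"
  by (simp add: godd_def gneg_def)

lemma godd_gadd: "godd x \<Longrightarrow> godd y \<Longrightarrow> godd (gadd x (y :: 'a::comm_ring_1 grass))"
  unfolding godd_def gadd_def by (metis add_0)

lemma godd_gsmult: "godd x \<Longrightarrow> godd (gsmult c (x :: 'a::comm_ring_1 grass))"
  unfolding godd_def gsmult_def by (metis mult_zero_right)

lemma mono_coeff_insert_right:
  "k \<notin> S \<Longrightarrow> k \<notin> T \<Longrightarrow>
    mono_coeff T {k} (insert k S) = (if T = S then (-1) ^ inv_count S {k} else 0)"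
  by (auto simp: mono_coeff_def insert_ident simp flip: insert_is_Un[of k T] Un_insert_right)

lemma mono_coeff_insert_left:
  "k \<notin> S \<Longrightarrow> k \<notin> T \<Longrightarrow>
    mono_coeff {k} T (insert k S) = (if T = S then (-1) ^ inv_count {k} S else 0)"
  by (auto simp: mono_coeff_def insert_ident simp flip: insert_is_Un[of k T])

lemma gmul_gen_right_insert:
  assumes x: "x \<in> grass" and k: "k \<notin> S" "k \<notin> \<Union>(supp x)"
  shows "gmul x (gen k) (insert k S) = x S * (-1) ^ inv_count S {k}"
proof -
  have "gmul x (gen k) (insert k S) = (\<Sum>T\<in>supp x. x T * mono_coeff T {k} (insert k S))"
    by (simp add: gmul_eq_sum_mono_coeff_supp[OF x gen_grass] supp_gen) (simp add: gen_def)
  also have "\<dots> = (\<Sum>T\<in>supp x. if T = S then x S * (-1) ^ inv_count S {k} else 0)"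
    using k by (intro sum.cong) (auto simp: mono_coeff_insert_right)
  also have "\<dots> = x S * (-1) ^ inv_count S {k}"
    using x by (simp add: sum.delta') (simp add: supp_def)
  finally show ?thesis .
qed

lemma gmul_gen_left_insert:
  assumes x: "x \<in> grass" and k: "k \<notin> S" "k \<notin> \<Union>(supp x)"
  shows "gmul (gen k) x (insert k S) = (-1) ^ inv_count {k} S * x S"
proof -
  have "gmul (gen k) x (insert k S) = (\<Sum>T\<in>supp x. x T * mono_coeff {k} T (insert k S))"
    by (simp add: gmul_eq_sum_mono_coeff_supp[OF gen_grass x] supp_gen) (simp add: gen_def)
  also have "\<dots> = (\<Sum>T\<in>supp x. if T = S then (-1) ^ inv_count {k} S * x S else 0)"
    using k by (intro sum.cong) (auto simp: mono_coeff_insert_left)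
  also have "\<dots> = (-1) ^ inv_count {k} S * x S"
    using x by (simp add: sum.delta') (simp add: supp_def)
  finally show ?thesis .
qed

lemma godd_if_anticommutes_gen:
  fixes x :: "'a::field_char_0 grass"
  assumes x: "x \<in> grass" and k: "k \<notin> \<Union>(supp x)"
    and anticomm: "gmul x (gen k) = gneg (gmul (gen k) x)"
  shows "godd x"
  unfolding godd_def
proof (intro allI impI)
  fix S assume S: "x S \<noteq> 0"
  then have "S \<in> supp x" "finite S" using x by (auto simp: supp_def finite_nonzero_index_set)
  then have "k \<notin> S" using k by auto
  have "x S * (-1) ^ inv_count S {k} = - ((-1) ^ inv_count {k} S * x S)"
    using fun_cong[OF anticomm, of "insert k S"]
    by (simp add: gmul_gen_right_insert[OF x \<open>k \<notin> S\<close> k]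
        gmul_gen_left_insert[OF x \<open>k \<notin> S\<close> k] gneg_def)
  moreover have "(-1::'a) ^ inv_count S {k} = (-1) ^ card S * (-1) ^ inv_count {k} S"
    using minus_one_power_inv_count_swap[of S "{k}"] \<open>finite S\<close> \<open>k \<notin> S\<close> by simp
  ultimately have "(1 + (-1) ^ card S) * ((-1) ^ inv_count {k} S * x S) = (0::'a)"
    by (simp add: algebra_simps)
  then show "odd (card S)"
    using S by (auto simp: minus_one_power_iff split: if_splits)
qed

definition gbounded :: "nat \<Rightarrow> 'a::zero grass \<Rightarrow> bool" where
  "gbounded N x \<longleftrightarrow> (\<forall>S. x S \<noteq> 0 \<longrightarrow> S \<subseteq> {..<N})"

lemma length_ge_gmul:
  assumes "x \<in> grass" "y \<in> grass" "length_ge a x" "length_ge b y"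
  shows "length_ge (a + b) (gmul x y)"
  unfolding length_ge_def
proof (intro allI impI)
  fix U assume "gmul x y U \<noteq> 0"
  then obtain S T where st: "x S \<noteq> 0" "y T \<noteq> 0" "S \<inter> T = {}" "S \<union> T = U"
    by (rule gmul_nonzeroE)
  then have "card U = card S + card T"
    using assms(1,2) by (metis card_Un_disjoint finite_nonzero_index_set)
  then show "a + b \<le> card U" using st assms(3,4) by (auto simp: length_ge_def intro: add_mono)
qed

lemma length_ge_gadd:
  "length_ge k x \<Longrightarrow> length_ge k y \<Longrightarrow> length_ge k (gadd x (y :: 'a::comm_ring_1 grass))"
  unfolding length_ge_def gadd_def by (metis add_0)

lemma length_ge_gneg: "length_ge k x \<Longrightarrow> length_ge k (gneg (x :: 'a::comm_ring_1 grass))"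
  by (auto simp: length_ge_def gneg_def)

lemma length_ge_gzero: "length_ge k gzero"
  by (auto simp: length_ge_def gzero_def)

lemma length_ge_mono: "length_ge k x \<Longrightarrow> j \<le> k \<Longrightarrow> length_ge j x"
  by (auto simp: length_ge_def)

lemma length_ge_1_if_godd: "godd x \<Longrightarrow> length_ge 1 x"
  by (auto simp: godd_def length_ge_def Suc_le_eq intro!: gr0I)

lemma gbounded_gmul: "gbounded N x \<Longrightarrow> gbounded N y \<Longrightarrow> gbounded N (gmul x y)"
  unfolding gbounded_def by (blast elim: gmul_nonzeroE)

lemma gbounded_gadd:
  "gbounded N x \<Longrightarrow> gbounded N y \<Longrightarrow> gbounded N (gadd x (y :: 'a::comm_ring_1 grass))"
  unfolding gbounded_def gadd_def by (metis add_0)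

lemma gbounded_gzero: "gbounded N gzero"
  by (auto simp: gbounded_def gzero_def)

lemma gbounded_gone: "gbounded N gone"
  by (auto simp: gbounded_def gone_def)

lemma gbounded_mono: "gbounded N x \<Longrightarrow> N \<le> M \<Longrightarrow> gbounded M x"
  unfolding gbounded_def by (meson lessThan_subset_iff order_trans)

lemma gbounded_gen: "i < N \<Longrightarrow> gbounded N (gen i :: 'a::comm_ring_1 grass)"
  by (auto simp: gbounded_def gen_def)

section \<open>Homomorphisms determined by the images of the generators\<close>

definition grass_hom :: "('a::comm_ring_1 grass \<Rightarrow> 'a grass) \<Rightarrow> bool" where
  "grass_hom h \<longleftrightarrow> (\<forall>x\<in>grass. h x \<in> grass)
     \<and> (\<forall>x\<in>grass. \<forall>y\<in>grass. h (gadd x y) = gadd (h x) (h y))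
     \<and> (\<forall>c. \<forall>x\<in>grass. h (gsmult c x) = gsmult c (h x))
     \<and> (\<forall>x\<in>grass. \<forall>y\<in>grass. h (gmul x y) = gmul (h x) (h y))
     \<and> h gone = gone"

definition anticommuting :: "(nat \<Rightarrow> 'a::comm_ring_1 grass) \<Rightarrow> bool" where
  "anticommuting u \<longleftrightarrow> (\<forall>i. u i \<in> grass) \<and> (\<forall>i k. gmul (u i) (u k) = gneg (gmul (u k) (u i)))
      \<and> (\<forall>i. gmul (u i) (u i) = gzero)"

definition gprod_set :: "(nat \<Rightarrow> 'a::comm_ring_1 grass) \<Rightarrow> nat set \<Rightarrow> 'a grass" where
  "gprod_set u V = gprod (map u (sorted_list_of_set V))"

lemma gprod_Nil [simp]: "gprod [] = gone"
  and gprod_Cons [simp]: "gprod (x # xs) = gmul x (gprod xs)"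
  by (simp_all add: gprod_def)

lemma gprod_grass [simp]: "\<forall>x\<in>set xs. x \<in> grass \<Longrightarrow> gprod xs \<in> grass"
  by (induction xs) auto

lemma gprod_set_empty [simp]: "gprod_set u {} = gone"
  by (simp add: gprod_set_def)

lemma gprod_set_insert_Min:
  assumes "finite V" "\<forall>v\<in>V. s < v"
  shows "gprod_set u (insert s V) = gmul (u s) (gprod_set u V)"
proof -
  have "V - {s} = V" using assms by auto
  then have "sorted_list_of_set (insert s V) = s # sorted_list_of_set V"
    using assms by (simp add: insort_is_Cons less_imp_le)
  then show ?thesis by (simp add: gprod_set_def)
qed

context
  fixes h :: "'a::comm_ring_1 grass \<Rightarrow> 'a grass"
  assumes h: "grass_hom h"
begin

lemma grass_hom_grass: "x \<in> grass \<Longrightarrow> h x \<in> grass"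
  and grass_hom_gadd: "x \<in> grass \<Longrightarrow> y \<in> grass \<Longrightarrow> h (gadd x y) = gadd (h x) (h y)"
  and grass_hom_gsmult: "x \<in> grass \<Longrightarrow> h (gsmult c x) = gsmult c (h x)"
  and grass_hom_gmul: "x \<in> grass \<Longrightarrow> y \<in> grass \<Longrightarrow> h (gmul x y) = gmul (h x) (h y)"
  and grass_hom_gone: "h gone = gone"
  using h by (auto simp: grass_hom_def)

lemma grass_hom_gzero: "h gzero = gzero"
proof -
  have "gsmult 0 (h gzero) = gzero" by (simp add: gsmult_def gzero_def)
  then show ?thesis using grass_hom_gsmult[of gzero 0] by simp
qed

lemma grass_hom_gneg: "x \<in> grass \<Longrightarrow> h (gneg x) = gneg (h x)"
  using grass_hom_gsmult[of x "-1"] by (simp add: gneg_eq_gsmult)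

lemma grass_hom_gsum: "finite A \<Longrightarrow> (\<And>i. i \<in> A \<Longrightarrow> F i \<in> grass) \<Longrightarrow> h (gsum A F) = gsum A (\<lambda>i. h (F i))"
  by (induction A rule: finite_induct) (simp_all add: grass_hom_gzero grass_hom_gadd gsum_insert)

lemma grass_hom_gprod: "\<forall>x\<in>set xs. x \<in> grass \<Longrightarrow> h (gprod xs) = gprod (map h xs)"
  by (induction xs) (simp_all add: grass_hom_gone grass_hom_gmul)

end

lemma grass_hom_comp: "grass_hom h \<Longrightarrow> grass_hom g \<Longrightarrow> grass_hom (h \<circ> g)"
  unfolding grass_hom_def by auto

lemma grass_hom_if_grass_aut: "grass_aut \<phi> \<Longrightarrow> grass_hom \<phi>"
  unfolding grass_aut_def grass_hom_def bij_betw_def by auto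

lemma anticommuting_if_godd:
  fixes u :: "nat \<Rightarrow> 'a::field_char_0 grass"
  assumes "\<And>i. u i \<in> grass" "\<And>i. godd (u i)"
  shows "anticommuting u"
proof -
  have "gmul (u i) (u i) = gzero" for i
  proof
    fix U
    have "gmul (u i) (u i) U = - gmul (u i) (u i) U"
      using godd_anticommute[OF assms(1,1,2,2), of i i] by (metis gneg_def)
    then show "gmul (u i) (u i) U = gzero U" by (simp add: gzero_def)
  qed
  moreover have "gmul (u i) (u k) = gneg (gmul (u k) (u i))" for i k
    by (rule godd_anticommute) (fact assms)+
  ultimately show ?thesis
    using assms(1) unfolding anticommuting_def by blast
qed

context
  fixes u :: "nat \<Rightarrow> 'a::comm_ring_1 grass"
  assumes u: "anticommuting u"
begin

lemma anticommuting_grass [simp]: "u i \<in> grass"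
  and anticommuting_swap: "gmul (u i) (u k) = gneg (gmul (u k) (u i))"
  and anticommuting_square: "gmul (u i) (u i) = gzero"
  using u unfolding anticommuting_def by blast+

lemma gprod_set_grass [simp]: "gprod_set u V \<in> grass"
  unfolding gprod_set_def by (rule gprod_grass) auto

lemma gmul_gprod_set_left:
  assumes "finite V"
  shows "gmul (u s) (gprod_set u V) =
    (if s \<in> V then gzero else gsmult ((-1) ^ card {v\<in>V. v < s}) (gprod_set u (insert s V)))"
  using assms
proof (induction V rule: finite_linorder_min_induct)
  case empty
  then show ?case by (simp add: gprod_set_insert_Min)
next
  case (insert m V)
  have P: "gprod_set u (insert m V) = gmul (u m) (gprod_set u V)"
    using insert.hyps by (rule gprod_set_insert_Min)
  consider "s < m" | "s = m" | "m < s" by arith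
  then show ?case
  proof cases
    case 1
    then have less: "\<forall>v\<in>insert m V. s < v" using insert.hyps(2) by auto
    then have none_below: "{v\<in>insert m V. v < s} = {}" by auto
    show ?thesis
      unfolding none_below using less insert.hyps(1) by (auto simp: gprod_set_insert_Min)
  next
    case 2
    then show ?thesis by (simp add: P flip: gmul_assoc) (simp add: anticommuting_square)
  next
    case 3
    have "gmul (u s) (gprod_set u (insert m V)) = gneg (gmul (u m) (gmul (u s) (gprod_set u V)))"
      by (simp add: P anticommuting_swap[of s m] gneg_eq_gsmult gmul_gsmult_left
          flip: gmul_assoc)
    also have "\<dots> = (if s \<in> insert m V then gzero
        else gsmult ((-1) ^ card {v\<in>insert m V. v < s}) (gprod_set u (insert s (insert m V))))"
    proof (cases "s \<in> V")
      case True
      then show ?thesis by (simp add: insert.IH)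
    next
      case False
      have "{v\<in>insert m V. v < s} = insert m {v\<in>V. v < s}" using 3 by auto
      then have "card {v\<in>insert m V. v < s} = Suc (card {v\<in>V. v < s})"
        using insert.hyps by (auto simp: card_insert_if)
      moreover have "gprod_set u (insert s (insert m V)) = gmul (u m) (gprod_set u (insert s V))"
        using insert.hyps 3 by (simp add: gprod_set_insert_Min insert_commute)
      ultimately show ?thesis
        using False 3 by (simp add: insert.IH gneg_eq_gsmult gmul_gsmult_right)
    qed
    finally show ?thesis .
  qed
qed

lemma gmul_gprod_set:
  assumes "finite S" "finite T"
  shows "gmul (gprod_set u S) (gprod_set u T) =
    (if S \<inter> T = {} then gsmult ((-1) ^ inv_count S T) (gprod_set u (S \<union> T)) else gzero)"
  using assms(1)
proof (induction S rule: finite_linorder_min_induct)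
  case empty
  then show ?case by simp
next
  case (insert m S)
  have "m \<notin> S" using insert.hyps(2) by auto
  have "gmul (gprod_set u (insert m S)) (gprod_set u T) =
      gmul (u m) (gmul (gprod_set u S) (gprod_set u T))"
    using insert.hyps by (simp add: gprod_set_insert_Min gmul_assoc)
  also have "\<dots> = (if insert m S \<inter> T = {}
      then gsmult ((-1) ^ inv_count (insert m S) T) (gprod_set u (insert m S \<union> T)) else gzero)"
  proof (cases "S \<inter> T = {} \<and> m \<notin> T")
    case True
    have "inv_count (insert m S) T = card {t\<in>T. t < m} + inv_count S T"
      using inv_count_Un_left[of "{m}" S T] inv_count_singleton_left[of T m] insert.hyps assms(2)
      by auto
    moreover have "{v \<in> S \<union> T. v < m} = {t\<in>T. t < m}"
      using insert.hyps(2) by auto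
    ultimately show ?thesis
      using True \<open>m \<notin> S\<close> insert.hyps(1) assms(2)
      by (simp add: insert.IH gmul_gsmult_right gmul_gprod_set_left power_add mult.commute)
  next
    case False
    then show ?thesis
      using insert.hyps(1) assms(2) by (auto simp: insert.IH gmul_gsmult_right gmul_gprod_set_left)
  qed
  finally show ?case .
qed

end

lemma gprod_set_gen: "finite S \<Longrightarrow> gprod_set gen S = gmono S"
proof (induction S rule: finite_linorder_min_induct)
  case empty
  then show ?case by (simp add: gone_eq_gmono)
next
  case (insert m S)
  then have "inv_count {m} S = 0" "m \<notin> S"
    by (auto simp: inv_count_singleton_left)
  with insert show ?case
    by (simp add: gprod_set_insert_Min gen_eq_gmono gmul_gmono_gmono)
qed

lemma gext_eq_gsum: "gext u x = gsum (supp x) (\<lambda>S. gsmult (x S) (gprod_set u S))"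
  by (simp add: gext_def gsum_def gsmult_def gprod_set_def supp_def)

lemma gext_eq_gsum_superset:
  assumes "finite A" "supp x \<subseteq> A"
  shows "gext u x = gsum A (\<lambda>S. gsmult (x S) (gprod_set u S))"
  unfolding gext_eq_gsum gsum_def
proof
  fix U
  show "(\<Sum>S\<in>supp x. gsmult (x S) (gprod_set u S) U) = (\<Sum>S\<in>A. gsmult (x S) (gprod_set u S) U)"
    by (rule sum.mono_neutral_left) (use assms in \<open>auto simp: supp_def gsmult_def\<close>)
qed

lemma gext_gmono: "gext u (gmono S) = gprod_set u S"
  by (subst gext_eq_gsum_superset[of "{S}"]) (auto simp: supp_def gmono_def gsum_def gsmult_def)

lemma gext_gen: "u i \<in> grass \<Longrightarrow> gext u (gen i) = u i"
  by (simp add: gen_eq_gmono gext_gmono gprod_set_def)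

lemma gext_gzero [simp]: "gext u gzero = gzero"
  by (simp add: gext_def gzero_def)

lemma gext_gone: "gext u gone = gone"
  by (simp add: gone_eq_gmono gext_gmono)

lemma gext_gadd:
  assumes "x \<in> grass" "y \<in> grass"
  shows "gext u (gadd x y) = gadd (gext u x) (gext u y)"
proof -
  let ?A = "supp x \<union> supp y"
  have "\<And>z. supp z \<subseteq> ?A \<Longrightarrow> gext u z = gsum ?A (\<lambda>S. gsmult (z S) (gprod_set u S))"
    by (rule gext_eq_gsum_superset) (use assms in auto)
  then show ?thesis
    using supp_gadd[of x y]
    by (simp add: gsum_def gadd_def gsmult_def sum.distrib distrib_right fun_eq_iff)
qed

lemma gext_gsmult: "x \<in> grass \<Longrightarrow> gext u (gsmult c x) = gsmult c (gext u x)"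
  using gext_eq_gsum_superset[of "supp x" "gsmult c x" u] supp_gsmult[of c x]
  by (simp add: gext_eq_gsum gsum_def gsmult_def sum_distrib_left mult.assoc fun_eq_iff)

lemma gext_gsum:
  "finite A \<Longrightarrow> (\<And>i. i \<in> A \<Longrightarrow> F i \<in> grass) \<Longrightarrow>
    gext u (gsum A F) = gsum A (\<lambda>i. gext u (F i))"
  by (induction A rule: finite_induct) (simp_all add: gsum_insert gext_gadd)

context
  fixes u :: "nat \<Rightarrow> 'a::comm_ring_1 grass"
  assumes u: "anticommuting u"
begin

lemma gext_grass: "x \<in> grass \<Longrightarrow> gext u x \<in> grass"
  using u by (simp add: gext_eq_gsum)

lemma gext_gmul_gmono:
  assumes "finite S" "finite T"
  shows "gext u (gmul (gmono S) (gmono T)) = gmul (gprod_set u S) (gprod_set u T)"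
  using assms u by (simp add: gmul_gmono_gmono gmul_gprod_set gext_gsmult gext_gmono)

lemma gext_gmul:
  assumes x: "x \<in> grass" and y: "y \<in> grass"
  shows "gext u (gmul x y) = gmul (gext u x) (gext u y)"
proof -
  have fin: "\<And>S. S \<in> supp x \<Longrightarrow> finite S" "\<And>T. T \<in> supp y \<Longrightarrow> finite T"
    using x y by (auto intro: finite_supp_member)
  have "gext u (gmul x y) = gext u (gsum (supp x) (\<lambda>S. gsum (supp y) (\<lambda>T.
      gsmult (x S * y T) (gmul (gmono S) (gmono T)))))"
    using x y by (simp add: gmul_eq_gsum_gmono)
  also have "\<dots> = gsum (supp x) (\<lambda>S. gsum (supp y) (\<lambda>T.
      gsmult (x S * y T) (gmul (gprod_set u S) (gprod_set u T))))"
    using x y fin by (simp add: gext_gsum gext_gsmult gext_gmul_gmono)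
  also have "\<dots> = gmul (gext u x) (gext u y)"
    using x y u by (simp add: gext_eq_gsum gmul_gsum_gsum)
  finally show ?thesis .
qed

lemma grass_hom_gext: "grass_hom (gext u)"
  unfolding grass_hom_def by (simp add: gext_grass gext_gadd gext_gsmult gext_gmul gext_gone)

end

lemma grass_hom_eq_gext:
  assumes h: "grass_hom h" and x: "x \<in> grass"
  shows "h x = gext (h \<circ> gen) x"
proof -
  have "h x = h (gsum (supp x) (\<lambda>S. gsmult (x S) (gprod_set gen S)))"
    using x by (simp add: gprod_set_gen finite_supp_member grass_expansion)
  also have "\<dots> = gsum (supp x) (\<lambda>S. gsmult (x S) (h (gprod_set gen S)))"
    using x
    by (simp add: grass_hom_gsum[OF h] grass_hom_gsmult[OF h] gprod_set_gen finite_supp_member)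
  also have "\<dots> = gext (h \<circ> gen) x"
    unfolding gext_eq_gsum gprod_set_def
    by (intro gsum_cong) (subst grass_hom_gprod[OF h]; auto)
  finally show ?thesis .
qed

lemma grass_hom_eqI:
  assumes "grass_hom g" "grass_hom h" "\<And>i. g (gen i) = h (gen i)" "x \<in> grass"
  shows "g x = h x"
  using grass_hom_eq_gext[of g x] grass_hom_eq_gext[of h x] assms by (simp add: comp_def)

section \<open>Perturbing the generators by terms of higher length\<close>

locale gen_perturbation =
  fixes u :: "nat \<Rightarrow> 'a::comm_ring_1 grass" and N :: nat
  assumes anticommuting: "anticommuting u"
    and defect_length: "length_ge 2 (gadd (u i) (gneg (gen i)))"
    and defect_bounded: "gbounded N (gadd (u i) (gneg (gen i)))"
begin

definition defect :: "nat \<Rightarrow> 'a grass" where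
  "defect i = gadd (u i) (gneg (gen i))"

definition prod_defect :: "nat list \<Rightarrow> 'a grass" where
  "prod_defect l = gadd (gprod (map u l)) (gneg (gprod (map gen l)))"

lemma u_grass [simp]: "u i \<in> grass"
  using anticommuting by (rule anticommuting_grass)

lemma defect_grass [simp]: "defect i \<in> grass"
  by (simp add: defect_def)

lemma length_ge_defect: "length_ge 2 (defect i)"
  unfolding defect_def by (rule defect_length)

lemma gbounded_defect: "N \<le> M \<Longrightarrow> gbounded M (defect i)"
  unfolding defect_def by (rule gbounded_mono[OF defect_bounded])

lemma u_eq_gen_plus_defect: "u i = gadd (gen i) (defect i)"
  by (simp add: defect_def gadd_def gneg_def fun_eq_iff)

lemma length_ge_u: "length_ge 1 (u i)"
proof -
  have "length_ge 1 (gadd (gen i) (defect i))"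
    using length_ge_1_if_godd[OF godd_gen] length_ge_mono[OF length_ge_defect]
    by (rule length_ge_gadd) simp
  then show ?thesis by (simp only: u_eq_gen_plus_defect[symmetric])
qed

lemma gbounded_u: "i < M \<Longrightarrow> N \<le> M \<Longrightarrow> gbounded M (u i)"
  by (simp only: u_eq_gen_plus_defect) (intro gbounded_gadd gbounded_gen gbounded_defect)

lemma prod_defect_grass [simp]: "prod_defect l \<in> grass"
  by (simp add: prod_defect_def)

lemma prod_defect_Nil: "prod_defect [] = gzero"
  by (simp add: prod_defect_def gadd_def gneg_def gzero_def)

lemma prod_defect_Cons:
  "prod_defect (s # l) = gadd (gmul (gen s) (prod_defect l)) (gmul (defect s) (gprod (map u l)))"
proof -
  have "gmul (gen s) (prod_defect l) =
      gadd (gmul (gen s) (gprod (map u l))) (gneg (gmul (gen s) (gprod (map gen l))))"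
    by (simp add: prod_defect_def gmul_gadd_right gneg_eq_gsmult gmul_gsmult_right)
  moreover have "gmul (defect s) (gprod (map u l)) =
      gadd (gmul (u s) (gprod (map u l))) (gneg (gmul (gen s) (gprod (map u l))))"
    by (simp add: defect_def gmul_gadd_left gneg_eq_gsmult gmul_gsmult_left)
  ultimately show ?thesis
    by (simp add: prod_defect_def gadd_def gneg_def fun_eq_iff)
qed

lemma length_ge_gprod_u: "length_ge (length l) (gprod (map u l))"
proof (induction l)
  case Nil
  then show ?case by (simp add: length_ge_def)
next
  case (Cons s l)
  from length_ge_gmul[OF u_grass _ length_ge_u Cons.IH] show ?case by simp
qed

lemma length_ge_prod_defect: "length_ge (Suc (length l)) (prod_defect l)"
proof (induction l)
  case Nil
  then show ?case by (simp add: prod_defect_Nil length_ge_gzero)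
next
  case (Cons s l)
  have "length_ge (1 + Suc (length l)) (gmul (gen s) (prod_defect l))"
    using length_ge_1_if_godd[OF godd_gen] Cons.IH by (rule length_ge_gmul[rotated 2]) simp_all
  moreover have "length_ge (2 + length l) (gmul (defect s) (gprod (map u l)))"
    by (rule length_ge_gmul) (simp_all add: length_ge_defect length_ge_gprod_u)
  ultimately show ?case
    unfolding prod_defect_Cons by (intro length_ge_gadd) (auto elim: length_ge_mono)
qed

lemma gbounded_gprod_u: "set l \<subseteq> {..<M} \<Longrightarrow> N \<le> M \<Longrightarrow> gbounded M (gprod (map u l))"
  by (induction l) (simp_all add: gbounded_gone gbounded_gmul gbounded_u)

lemma gbounded_prod_defect: "set l \<subseteq> {..<M} \<Longrightarrow> N \<le> M \<Longrightarrow> gbounded M (prod_defect l)"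
  by (induction l)
    (simp_all add: prod_defect_Nil prod_defect_Cons gbounded_gzero gbounded_gadd gbounded_gmul
      gbounded_gen gbounded_defect gbounded_gprod_u)

lemma gprod_set_u_eq:
  assumes "finite S"
  shows "gprod_set u S = gadd (gmono S) (prod_defect (sorted_list_of_set S))"
proof -
  have gen: "gprod (map gen (sorted_list_of_set S)) = gmono S"
    using gprod_set_gen[OF assms] unfolding gprod_set_def .
  show ?thesis
    unfolding gprod_set_def prod_defect_def gen by (simp add: gadd_def gneg_def fun_eq_iff)
qed

lemma grass_hom_gext_u: "grass_hom (gext u)"
  using anticommuting by (rule grass_hom_gext)

lemma gext_eq_gzeroD:
  assumes x: "x \<in> grass" and zero: "gext u x = gzero"
  shows "x = gzero"
proof (rule ccontr)
  assume "x \<noteq> gzero"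
  then obtain S0 where "S0 \<in> supp x" by (auto simp: supp_def gzero_def)
  then obtain S where S: "S \<in> supp x" and minimal: "\<And>T. T \<in> supp x \<Longrightarrow> card S \<le> card T"
    using ex_has_least_nat[of "\<lambda>S. S \<in> supp x" S0 card] by blast
  have "gext u x S = (\<Sum>T\<in>supp x. x T * gprod_set u T S)"
    by (simp add: gext_eq_gsum gsum_def gsmult_def)
  also have "\<dots> = (\<Sum>T\<in>supp x. if T = S then x T else 0)"
  proof (rule sum.cong[OF refl])
    fix T assume T: "T \<in> supp x"
    then have "finite T" using x by (simp add: finite_supp_member)
    \<comment> \<open>\<open>S\<close> is shortest in \<open>supp x\<close>, and the perturbation only produces longer monomials\<close>
    have "prod_defect (sorted_list_of_set T) S = 0"
      using length_ge_prod_defect[of "sorted_list_of_set T"] minimal[OF T] \<open>finite T\<close>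
      by (force simp: length_ge_def)
    then show "x T * gprod_set u T S = (if T = S then x T else 0)"
      by (simp add: gprod_set_u_eq[OF \<open>finite T\<close>] gadd_def gmono_def)
  qed
  also have "\<dots> = x S"
    using x S by (simp add: sum.delta')
  finally show False
    using zero S by (simp add: gzero_def supp_def)
qed

lemma inj_on_gext: "inj_on (gext u) grass"
proof (rule inj_onI)
  fix x y assume x: "x \<in> grass" and y: "y \<in> grass" and eq: "gext u x = gext u y"
  have "gext u (gadd x (gneg y)) = gzero"
    using x y eq
    by (simp add: gext_gadd gneg_eq_gsmult gext_gsmult) (simp add: gadd_def gsmult_def gzero_def)
  then have "gadd x (gneg y) = gzero"
    using gext_eq_gzeroD x y by simp
  then show "x = y"
    by (simp add: gadd_def gneg_def gzero_def fun_eq_iff)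
qed

lemma in_range_if_monomials_in_range:
  assumes x: "x \<in> grass" and range: "\<And>T. T \<in> supp x \<Longrightarrow> gmono T \<in> gext u ` grass"
  shows "x \<in> gext u ` grass"
proof -
  from range have "\<forall>T\<in>supp x. \<exists>y. y \<in> grass \<and> gext u y = gmono T"
    by (metis imageE)
  then obtain y where y: "\<And>T. T \<in> supp x \<Longrightarrow> y T \<in> grass \<and> gext u (y T) = gmono T"
    by metis
  have "gext u (gsum (supp x) (\<lambda>T. gsmult (x T) (y T))) =
      gsum (supp x) (\<lambda>T. gsmult (x T) (gmono T))"
    using x y by (simp add: gext_gsum gext_gsmult cong: gsum_cong)
  also have "\<dots> = x"
    using x by (rule grass_expansion)
  finally show ?thesis
    using x y by (metis (no_types, lifting) finite_supp gsmult_grass gsum_grass image_eqI)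
qed

text \<open>Downward induction on the length of \<open>S\<close>: \<open>gext u (gmono S)\<close> is \<open>gmono S\<close> plus strictly
  longer monomials, all of them still indexed below \<open>M\<close>.\<close>

lemma gmono_in_range: "N \<le> M \<Longrightarrow> S \<subseteq> {..<M} \<Longrightarrow> gmono S \<in> gext u ` grass"
proof (induction "M - card S" arbitrary: S rule: less_induct)
  case less
  have S: "finite S" using less.prems(2) finite_subset by blast
  let ?r = "prod_defect (sorted_list_of_set S)"
  have "?r \<in> gext u ` grass"
  proof (rule in_range_if_monomials_in_range)
    fix T assume T: "T \<in> supp ?r"
    have TM: "T \<subseteq> {..<M}"
      using gbounded_prod_defect[of "sorted_list_of_set S" M] less.prems S T
      by (auto simp: gbounded_def supp_def)
    have "card S < card T"
      using length_ge_prod_defect[of "sorted_list_of_set S"] S T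
      by (auto simp: length_ge_def supp_def)
    moreover have "card T \<le> M"
      using card_mono[OF _ TM] by simp
    ultimately have "M - card T < M - card S" by linarith
    then show "gmono T \<in> gext u ` grass"
      using less.hyps less.prems(1) TM by blast
  qed simp
  then obtain w where w: "?r = gext u w" "w \<in> grass" by (rule imageE)
  have "gext u (gadd (gmono S) (gneg w)) = gmono S"
    using w S
    by (simp add: gext_gadd gext_gmono gprod_set_u_eq gneg_eq_gsmult gext_gsmult)
      (simp add: gadd_def gsmult_def fun_eq_iff)
  then show ?case
    using w S by (metis gadd_grass gmono_grass gneg_grass image_eqI)
qed

lemma range_gext: "gext u ` grass = grass"
proof
  show "gext u ` grass \<subseteq> grass"
    using anticommuting by (auto intro: gext_grass)
  show "grass \<subseteq> gext u ` grass"
  proof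
    fix x :: "'a grass" assume x: "x \<in> grass"
    obtain M where M: "\<forall>n\<in>\<Union>(supp x). n < M"
      using finite_Union_supp[OF x] finite_nat_set_iff_bounded by blast
    show "x \<in> gext u ` grass"
    proof (rule in_range_if_monomials_in_range[OF x])
      fix T assume "T \<in> supp x"
      then have "T \<subseteq> {..<max N M}" using M by fastforce
      then show "gmono T \<in> gext u ` grass" by (rule gmono_in_range[rotated]) simp
    qed
  qed
qed

lemma bij_betw_gext: "bij_betw (gext u) grass grass"
  using inj_on_gext range_gext by (simp add: bij_betw_def)

end

section \<open>Conjugate gradings have the same graded identities\<close>

lemma peval_eq_gsum: "peval s f = gsum {w. f w \<noteq> 0} (\<lambda>w. gsmult (f w) (gprod (map s w)))"
  by (simp add: peval_def gsum_def gsmult_def)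

lemma peval_grass: "(\<And>v. s v \<in> grass) \<Longrightarrow> f \<in> fpolys \<Longrightarrow> peval s f \<in> grass"
  by (auto simp: peval_eq_gsum fpolys_def)

lemma grass_hom_peval:
  assumes h: "grass_hom h" and s: "\<And>v. s v \<in> grass" and f: "f \<in> fpolys"
  shows "h (peval s f) = peval (h \<circ> s) f"
  using f s
  by (simp add: peval_eq_gsum fpolys_def grass_hom_gsum[OF h] grass_hom_gsmult[OF h]
      grass_hom_gprod[OF h] cong: gsum_cong)

lemma substitution_through_image:
  assumes "(\<forall>i. s (Inl i) \<in> h ` A0) \<and> (\<forall>i. s (Inr i) \<in> h ` A1)"
  obtains t where "\<And>i. t (Inl i) \<in> A0" "\<And>i. t (Inr i) \<in> A1" "s = h \<circ> t"
proof -
  have "\<exists>y. y \<in> case_sum (\<lambda>_. A0) (\<lambda>_. A1) v \<and> s v = h y" for v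
    using assms by (cases v) (force simp: image_iff)+
  then obtain t where t: "\<And>v. t v \<in> case_sum (\<lambda>_. A0) (\<lambda>_. A1) v" and st: "\<And>v. s v = h (t v)"
    by metis
  show thesis
  proof (rule that[of t])
    show "t (Inl i) \<in> A0" for i
      using t[of "Inl i"] by simp
    show "t (Inr i) \<in> A1" for i
      using t[of "Inr i"] by simp
    show "s = h \<circ> t"
      using st by auto
  qed
qed

lemma T2_image:
  fixes h :: "'a::comm_ring_1 grass \<Rightarrow> 'a grass"
  assumes h: "grass_hom h" "inj_on h grass" and A: "A0 \<subseteq> grass" "A1 \<subseteq> grass"
  shows "T2 (h ` A0) (h ` A1) = T2 A0 A1"
proof (intro set_eqI iffI)
  fix f assume f: "f \<in> T2 (h ` A0) (h ` A1)"
  show "f \<in> T2 A0 A1"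
    unfolding T2_def
  proof (intro CollectI conjI allI impI)
    show fp: "f \<in> fpolys" using f by (simp add: T2_def)
    fix s :: "nat + nat \<Rightarrow> 'a grass"
    assume s: "(\<forall>i. s (Inl i) \<in> A0) \<and> (\<forall>i. s (Inr i) \<in> A1)"
    then have sg: "s v \<in> grass" for v using A by (cases v) auto
    have "h (peval s f) = peval (h \<circ> s) f"
      using h(1) sg fp by (rule grass_hom_peval)
    also have "\<dots> = gzero"
      using f s by (simp add: T2_def)
    also have "\<dots> = h gzero"
      using h by (simp add: grass_hom_gzero)
    finally show "peval s f = gzero"
      using inj_onD[OF h(2)] peval_grass[OF sg fp] by simp
  qed
next
  fix f assume f: "f \<in> T2 A0 A1"
  show "f \<in> T2 (h ` A0) (h ` A1)"
    unfolding T2_def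
  proof (intro CollectI conjI allI impI)
    show fp: "f \<in> fpolys" using f by (simp add: T2_def)
    fix s :: "nat + nat \<Rightarrow> 'a grass"
    assume "(\<forall>i. s (Inl i) \<in> h ` A0) \<and> (\<forall>i. s (Inr i) \<in> h ` A1)"
    then obtain t where t: "\<And>i. t (Inl i) \<in> A0" "\<And>i. t (Inr i) \<in> A1" and s: "s = h \<circ> t"
      by (rule substitution_through_image) blast
    have tg: "t v \<in> grass" for v using t A by (cases v) auto
    have "peval s f = h (peval t f)"
      unfolding s using h(1) tg fp by (rule grass_hom_peval[symmetric])
    also have "\<dots> = gzero"
      using f t h by (simp add: T2_def grass_hom_gzero)
    finally show "peval s f = gzero" .
  qed
qed

lemma eigenspace_conjugate:
  assumes inj: "inj_on h grass" and onto: "h ` grass = grass"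
    and \<phi>': "\<And>x. x \<in> grass \<Longrightarrow> \<phi>' x \<in> grass"
    and conj: "\<And>x. x \<in> grass \<Longrightarrow> \<phi> (h x) = h (\<phi>' x)"
    and c: "\<And>x. x \<in> grass \<Longrightarrow> c x \<in> grass" "\<And>x. x \<in> grass \<Longrightarrow> h (c x) = c (h x)"
  shows "{x \<in> grass. \<phi> x = c x} = h ` {y \<in> grass. \<phi>' y = c y}"
proof (intro equalityI subsetI)
  fix x assume "x \<in> {x \<in> grass. \<phi> x = c x}"
  then have x: "x \<in> grass" "\<phi> x = c x" by auto
  then obtain y where y: "y \<in> grass" "x = h y" using onto by blast
  then have "h (\<phi>' y) = h (c y)" using x conj c by simp
  then have "\<phi>' y = c y" using inj_onD[OF inj] y \<phi>' c by blast
  then show "x \<in> h ` {y \<in> grass. \<phi>' y = c y}" using y by blast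
next
  fix x assume "x \<in> h ` {y \<in> grass. \<phi>' y = c y}"
  then obtain y where y: "y \<in> grass" "\<phi>' y = c y" "x = h y" by blast
  then show "x \<in> {x \<in> grass. \<phi> x = c x}" using onto conj c by auto
qed

lemma T2_eq_if_conjugate:
  fixes \<phi> \<phi>' :: "'a::field grass \<Rightarrow> 'a grass"
  assumes h: "grass_hom h" "bij_betw h grass grass"
    and \<phi>': "\<And>x. x \<in> grass \<Longrightarrow> \<phi>' x \<in> grass"
    and conj: "\<And>x. x \<in> grass \<Longrightarrow> \<phi> (h x) = h (\<phi>' x)"
  shows "T2 (Ezero \<phi>) (Eone \<phi>) = T2 (Ezero \<phi>') (Eone \<phi>')"
proof -
  have inj: "inj_on h grass" and onto: "h ` grass = grass"
    using h(2) by (auto simp: bij_betw_def)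
  have "Ezero \<phi> = h ` Ezero \<phi>'"
    unfolding Ezero_def by (rule eigenspace_conjugate[OF inj onto]) (simp_all add: \<phi>' conj)
  moreover have "Eone \<phi> = h ` Eone \<phi>'"
    unfolding Eone_def
    by (rule eigenspace_conjugate[OF inj onto]) (simp_all add: \<phi>' conj grass_hom_gneg[OF h(1)])
  ultimately show ?thesis
    using T2_image[OF h(1) inj] by (simp add: Ezero_def Eone_def)
qed

lemma grass_aut_grass: "grass_aut \<phi> \<Longrightarrow> x \<in> grass \<Longrightarrow> \<phi> x \<in> grass"
  unfolding grass_aut_def bij_betw_def by blast

lemma godd_image_gen:
  fixes \<phi> :: "'a::field_char_0 grass \<Rightarrow> 'a grass"
  assumes aut: "grass_aut \<phi>" and fixed: "infinite (Iplus \<phi>)"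
  shows "godd (\<phi> (gen j))"
proof -
  have g: "\<phi> (gen j) \<in> grass" using aut by (simp add: grass_aut_grass)
  then have "infinite (Iplus \<phi> - \<Union>(supp (\<phi> (gen j))))"
    using fixed by (simp add: finite_Union_supp)
  then obtain k where "k \<in> Iplus \<phi> - \<Union>(supp (\<phi> (gen j)))"
    by (metis ex_in_conv finite.emptyI)
  then have k: "k \<in> Iplus \<phi>" "k \<notin> \<Union>(supp (\<phi> (gen j)))"
    by simp_all
  have "gmul (gen j) (gen k) = gneg (gmul (gen k) (gen j) :: 'a grass)"
    by (rule godd_anticommute) (simp_all add: godd_gen)
  then have "\<phi> (gmul (gen j) (gen k)) = \<phi> (gneg (gmul (gen k) (gen j)))" by simp
  then have "gmul (\<phi> (gen j)) (gen k) = gneg (gmul (gen k) (\<phi> (gen j)))"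
    using k(1) grass_hom_if_grass_aut[OF aut]
    by (simp add: grass_hom_gmul grass_hom_gneg Iplus_def)
  then show ?thesis
    using g k(2) by (rule godd_if_anticommutes_gen[rotated 2])
qed

lemma lin_part_eq:
  fixes \<phi> :: "'a::field_char_0 grass \<Rightarrow> 'a grass"
  assumes aj: "\<forall>j\<in>Jset \<phi>. length_ge 2 (aj \<phi> j)"
  shows "lin_part \<phi> i = (if i \<in> Iplus \<phi> then gen i else gneg (gen i))"
proof -
  have card1: "\<phi> (gen i) S = (if i \<in> Iplus \<phi> then gen i S else - gen i S)" if "card S = 1" for S
  proof -
    consider "i \<in> Iplus \<phi>" | "i \<notin> Iplus \<phi>" "\<phi> (gen i) = gneg (gen i)"
      | "i \<in> Jset \<phi>" "i \<notin> Iplus \<phi>"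
      unfolding Iplus_def Iset_def Jset_def by blast
    then show ?thesis
    proof cases
      case 1
      then show ?thesis by (simp add: Iplus_def)
    next
      case 2
      then show ?thesis by (simp add: gneg_def)
    next
      case 3
      then have "aj \<phi> i S = 0" using aj that by (force simp: length_ge_def)
      with 3 show ?thesis by (simp add: aj_def gsmult_def gadd_def add_eq_0_iff)
    qed
  qed
  show ?thesis
    unfolding lin_part_def fun_eq_iff by (simp add: card1) (auto simp: gen_def gneg_def)
qed

text \<open>Off \<open>I\<^sup>+\<close> the new generator is the \<open>-1\<close>-eigencomponent \<open>(e\<^sub>i - \<phi> e\<^sub>i) / 2\<close> of
  \<open>e\<^sub>i\<close>; it is \<open>e\<^sub>i\<close> itself for \<open>i \<in> I\<^sup>-\<close> and \<open>e\<^sub>j - a\<^sub>j\<close> for \<open>j \<in> J\<close>.\<close>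

definition adapted_gen :: "('a::field grass \<Rightarrow> 'a grass) \<Rightarrow> nat \<Rightarrow> 'a grass" where
  "adapted_gen \<phi> i =
    (if i \<in> Iplus \<phi> then gen i else gsmult (1/2) (gadd (gen i) (gneg (\<phi> (gen i)))))"

lemma adapted_gen_grass: "grass_aut \<phi> \<Longrightarrow> adapted_gen \<phi> i \<in> grass"
  by (simp add: adapted_gen_def grass_aut_grass)

lemma image_adapted_gen:
  fixes \<phi> :: "'a::field_char_0 grass \<Rightarrow> 'a grass"
  assumes aut: "grass_aut \<phi>" and invol: "\<forall>x\<in>grass. \<phi> (\<phi> x) = x"
  shows "\<phi> (adapted_gen \<phi> i) =
    (if i \<in> Iplus \<phi> then adapted_gen \<phi> i else gneg (adapted_gen \<phi> i))"
proof (cases "i \<in> Iplus \<phi>")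
  case True
  then show ?thesis by (simp add: adapted_gen_def Iplus_def)
next
  case False
  have hom: "grass_hom \<phi>" using aut by (rule grass_hom_if_grass_aut)
  have "\<phi> (adapted_gen \<phi> i) = gsmult (1/2) (gadd (\<phi> (gen i)) (gneg (gen i)))"
    using False aut invol
    by (simp add: adapted_gen_def grass_hom_gsmult[OF hom] grass_hom_gadd[OF hom]
        grass_hom_gneg[OF hom] grass_aut_grass)
  with False show ?thesis
    by (simp add: adapted_gen_def gsmult_def gadd_def gneg_def fun_eq_iff algebra_simps)
qed

lemma adapted_gen_minus_gen:
  fixes \<phi> :: "'a::field_char_0 grass \<Rightarrow> 'a grass"
  shows "gadd (adapted_gen \<phi> i) (gneg (gen i)) = (if i \<in> Jset \<phi> then gneg (aj \<phi> i) else gzero)"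
proof (cases "i \<in> Iset \<phi>")
  case True
  then show ?thesis
    by (auto simp: adapted_gen_def Iplus_def Iset_def Jset_def gadd_def gneg_def gsmult_def
        gzero_def fun_eq_iff)
next
  case False
  then show ?thesis
    by (auto simp: adapted_gen_def Iplus_def Jset_def aj_def gadd_def gneg_def gsmult_def
        fun_eq_iff algebra_simps)
qed

lemma gen_perturbation_adapted_gen:
  fixes \<phi> :: "'a::field_char_0 grass \<Rightarrow> 'a grass"
  assumes aut: "grass_aut \<phi>" and fixed: "infinite (Iplus \<phi>)" and J: "finite (Jset \<phi>)"
    and aj: "\<forall>j\<in>Jset \<phi>. length_ge 2 (aj \<phi> j)"
  obtains N where "gen_perturbation (adapted_gen \<phi>) N"
proof -
  have "aj \<phi> j \<in> grass" for j
    using aut by (simp add: aj_def grass_aut_grass)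
  then have "finite (\<Union>j\<in>Jset \<phi>. \<Union>(supp (aj \<phi> j)))"
    using J by (simp add: finite_Union_supp)
  then obtain N where N: "\<forall>n\<in>(\<Union>j\<in>Jset \<phi>. \<Union>(supp (aj \<phi> j))). n < N"
    by (auto simp: finite_nat_set_iff_bounded)
  show ?thesis
  proof (rule that, unfold_locales)
    show "anticommuting (adapted_gen \<phi>)"
    proof (rule anticommuting_if_godd)
      show "adapted_gen \<phi> i \<in> grass" for i
        using aut by (rule adapted_gen_grass)
      show "godd (adapted_gen \<phi> i)" for i
        using aut fixed
        by (simp add: adapted_gen_def godd_gen godd_gsmult godd_gadd godd_gneg godd_image_gen)
    qed
    show "length_ge 2 (gadd (adapted_gen \<phi> i) (gneg (gen i)))" for i
      using aj by (simp add: adapted_gen_minus_gen length_ge_gneg length_ge_gzero)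
    show "gbounded N (gadd (adapted_gen \<phi> i) (gneg (gen i)))" for i
      unfolding adapted_gen_minus_gen using N
      by (auto simp: gbounded_def gneg_def gzero_def supp_def)
  qed
qed

lemma grass_hom_linearization:
  fixes \<phi> :: "'a::field_char_0 grass \<Rightarrow> 'a grass"
  assumes "\<forall>j\<in>Jset \<phi>. length_ge 2 (aj \<phi> j)"
  shows "grass_hom (linearization \<phi>)"
  unfolding linearization_def using assms
  by (intro grass_hom_gext anticommuting_if_godd) (simp_all add: lin_part_eq godd_gen godd_gneg)

lemma linearization_conjugate:
  fixes \<phi> :: "'a::field_char_0 grass \<Rightarrow> 'a grass"
  assumes aut: "grass_aut \<phi>" and invol: "\<forall>x\<in>grass. \<phi> (\<phi> x) = x"
    and pert: "gen_perturbation (adapted_gen \<phi>) N"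
    and aj: "\<forall>j\<in>Jset \<phi>. length_ge 2 (aj \<phi> j)"
    and x: "x \<in> grass"
  shows "\<phi> (gext (adapted_gen \<phi>) x) = gext (adapted_gen \<phi>) (linearization \<phi> x)"
proof -
  let ?\<psi> = "gext (adapted_gen \<phi>)"
  have \<psi>: "grass_hom ?\<psi>"
    using pert by (rule gen_perturbation.grass_hom_gext_u)
  have lin: "grass_hom (linearization \<phi>)"
    using aj by (rule grass_hom_linearization)
  have "(\<phi> \<circ> ?\<psi>) x = (?\<psi> \<circ> linearization \<phi>) x"
  proof (rule grass_hom_eqI[OF _ _ _ x])
    show "grass_hom (\<phi> \<circ> ?\<psi>)"
      using grass_hom_if_grass_aut[OF aut] \<psi> by (rule grass_hom_comp)
    show "grass_hom (?\<psi> \<circ> linearization \<phi>)"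
      using \<psi> lin by (rule grass_hom_comp)
    show "(\<phi> \<circ> ?\<psi>) (gen i) = (?\<psi> \<circ> linearization \<phi>) (gen i)" for i
      using aut invol aj \<psi>
      by (simp add: gext_gen adapted_gen_grass image_adapted_gen linearization_def lin_part_eq
          grass_hom_gneg)
  qed
  then show ?thesis by simp
qed

theorem mainTheorem3:
  fixes \<phi> :: "'a::field_char_0 grass \<Rightarrow> 'a grass"
  assumes "grass_aut \<phi>"
    and "\<forall>x\<in>grass. \<phi> (\<phi> x) = x"
    and "type_S2 \<phi>"
    and "\<forall>j\<in>Jset \<phi>. length_ge 3 (aj \<phi> j)"
  shows "T2 (Ezero \<phi>) (Eone \<phi>)
           = T2 (Ezero (linearization \<phi>)) (Eone (linearization \<phi>))"
proof -
  have aj: "\<forall>j\<in>Jset \<phi>. length_ge 2 (aj \<phi> j)"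
    using assms(4) by (auto intro: length_ge_mono[where k = 3])
  obtain N where pert: "gen_perturbation (adapted_gen \<phi>) N"
    using gen_perturbation_adapted_gen[OF assms(1) _ _ aj] assms(3) by (auto simp: type_S2_def)
  let ?\<psi> = "gext (adapted_gen \<phi>)"
  show ?thesis
  proof (rule T2_eq_if_conjugate)
    show "grass_hom ?\<psi>" "bij_betw ?\<psi> grass grass"
      using pert by (rule gen_perturbation.grass_hom_gext_u, rule gen_perturbation.bij_betw_gext)
    show "linearization \<phi> x \<in> grass" if "x \<in> grass" for x
      using grass_hom_linearization[OF aj] that by (rule grass_hom_grass)
    show "\<phi> (?\<psi> x) = ?\<psi> (linearization \<phi> x)" if "x \<in> grass" for x
      using assms(1,2) pert aj that by (rule linearization_conjugate)
  qed
qed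

end
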